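(* Let $G$ be a finite group and $H \leqslant G$ a Hall subgroup (i.e. $\gcd(|H|, |G:H|)=1$). If $H$ is exponential in $G$, then $H \lhd G$.
   Context: A subgroup $H$ of finite index in a group $G$ is called exponential in $G$ if $x^{|G:H|} \in H$ for every $x \in G$. *)

theory Defs
  imports "HOL-Algebra.Algebra"
begin

definition index :: "('a, 'b) monoid_scheme \<Rightarrow> 'a set \<Rightarrow> nat" where
  "index G H = card (rcosets\<^bsub>G\<^esub> H)"

definition exponential :: "('a, 'b) monoid_scheme \<Rightarrow> 'a set \<Rightarrow> bool" where
  "exponential G H \<longleftrightarrow> subgroup H G \<and> finite (rcosets\<^bsub>G\<^esub> H) \<and>
     (\<forall>x \<in> carrier G. x [^]\<^bsub>G\<^esub> index G H \<in> H)"

end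

theory Submission
  imports Defs "HOL-Number_Theory.Cong"
begin

text \<open>If \<open>x\<^sup>n \<in> H\<close> for all \<open>x\<close> and \<open>n\<close> is invertible modulo \<open>m = |H|\<close>, say
  \<open>n a \<equiv> 1 (mod m)\<close>, then every \<open>x\<close> with \<open>x\<^sup>m = 1\<close> equals \<open>(x\<^sup>n)\<^sup>a \<in> H\<close>. Together with
  Lagrange this shows that \<open>H\<close> is exactly the set of solutions of \<open>x\<^sup>m = 1\<close>, which is
  closed under conjugation.\<close>

lemma (in group) nat_pow_conj:
  assumes "g \<in> carrier G" "h \<in> carrier G"
  shows "(g \<otimes> h \<otimes> inv g) [^] (k::nat) = g \<otimes> h [^] k \<otimes> inv g"
proof (induction k)
  case 0
  then show ?case using assms by simp
next
  case (Suc k)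
  have cancel: "inv g \<otimes> (g \<otimes> y) = y" if "y \<in> carrier G" for y
    using assms that by (simp add: m_assoc[symmetric])
  show ?case
    using Suc assms by (simp add: m_assoc cancel)
qed

lemma (in group) nat_pow_eq_self_if_cong_one:
  assumes x: "x \<in> carrier G" and "x [^] (m::nat) = \<one>" and "[a = 1] (mod m)"
  shows "x [^] a = x"
  using \<open>[a = 1] (mod m)\<close> unfolding cong_to_1'_nat
proof (elim disjE exE conjE)
  assume "a = 0" "m = 1"
  then show ?thesis using assms by simp
next
  fix k assume "a = 1 + k * m"
  then have "x [^] a = (x [^] m) [^] k \<otimes> x"
    using x by (simp add: nat_pow_pow mult.commute)
  then show ?thesis
    using assms by simp
qed

lemma (in group) subgroup_nat_pow_closed:
  assumes "subgroup H G" "h \<in> H"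
  shows "h [^] (k::nat) \<in> H"
  using subgroup_int_pow_closed[OF assms, of "int k"] by (simp add: int_pow_int)

lemma (in group) subgroup_pow_card_eq_one:
  assumes "subgroup H G" "h \<in> H"
  shows "h [^] card H = \<one>"
proof -
  interpret H: group "G\<lparr>carrier := H\<rparr>"
    using assms(1) by (rule subgroup_imp_group)
  show ?thesis
    using H.pow_order_eq_1 assms nat_pow_consistent[of h "card H" H]
    by (simp add: order_def)
qed

lemma (in group) subgroup_eq_roots_of_unity_if_coprime_powers:
  assumes H: "subgroup H G"
    and pow_in: "\<And>x. x \<in> carrier G \<Longrightarrow> x [^] n \<in> H"
    and "coprime (card H) n"
  shows "H = {x \<in> carrier G. x [^] card H = \<one>}"
proof
  show "H \<subseteq> {x \<in> carrier G. x [^] card H = \<one>}"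
    using subgroup_pow_card_eq_one[OF H] subgroup.subset[OF H] by blast
next
  obtain a where a: "[n * a = 1] (mod card H)"
    using cong_solve_coprime_nat \<open>coprime (card H) n\<close> by (metis coprime_commute One_nat_def)
  show "{x \<in> carrier G. x [^] card H = \<one>} \<subseteq> H"
  proof clarify
    fix x assume x: "x \<in> carrier G" and "x [^] card H = \<one>"
    then have "(x [^] n) [^] a = x"
      using nat_pow_eq_self_if_cong_one[OF x _ a] by (simp add: nat_pow_pow)
    then show "x \<in> H"
      using subgroup_nat_pow_closed[OF H pow_in[OF x]] by metis
  qed
qed

lemma (in group) normal_if_coprime_powers:
  assumes H: "subgroup H G"
    and "\<And>x. x \<in> carrier G \<Longrightarrow> x [^] n \<in> H"
    and "coprime (card H) n"
  shows "H \<lhd> G"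
proof -
  have H_eq: "H = {x \<in> carrier G. x [^] card H = \<one>}"
    using subgroup_eq_roots_of_unity_if_coprime_powers assms by blast
  show ?thesis unfolding normal_inv_iff
  proof (intro conjI ballI H)
    fix g h assume g: "g \<in> carrier G" and h: "h \<in> H"
    have "h \<in> carrier G" "h [^] card H = \<one>"
      using h H_eq by blast+
    then show "g \<otimes> h \<otimes> inv g \<in> H"
      using g by (subst H_eq) (simp add: nat_pow_conj)
  qed
qed

theorem corollary4p4:
  fixes G :: "('a, 'b) monoid_scheme" and H :: "'a set"
  assumes "group G" and "finite (carrier G)" and "subgroup H G"
    and "coprime (card H) (index G H)"
    and "exponential G H"
  shows "H \<lhd> G"
  using group.normal_if_coprime_powers[OF assms(1,3) _ assms(4)] assms(5)
  unfolding exponential_def by blast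

end
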